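(* Let $(X,\mathcal{M})$ be a measurable space, $\Sigma$ a compact Hausdorff group with Haar probability measure $\mu_\Sigma$, and $T:\Sigma\times X\to X$ a measurable group action. Let $n\in\mathbb{Z}^+$, $V\subset\mathcal{M}_b(X)^n$ a linear subspace equipped with the $M(X)$-topology, and $\Gamma\subset V$. If $\Gamma$ is convex and closed, $S_\Sigma[V]\subset V$, and $\Gamma$ is closed under $\Sigma$ (i.e. $\gamma\circ T_\sigma\in\Gamma$ for all $\gamma\in\Gamma$, $\sigma\in\Sigma$), then $S_\Sigma[\Gamma]\subset\Gamma$.
   Context: $S_\Sigma[\gamma](x)=\int_\Sigma\gamma(T_\sigma(x))\mu_\Sigma(d\sigma)$, applied componentwise. $M(X)$-topology: with $M(X)$ the finite signed measures on $X$, for $\nu\in M(X)^n$ let $\tau_\nu(\gamma)=\sum_{i=1}^n\int\gamma^i d\nu_i$; $V$ carries the weakest topology making all $\tau_\nu$ continuous (a locally convex topology with dual $\{\tau_\nu\}$). *)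

theory Defs
  imports "HOL-Probability.Probability"
begin

definition compact_hausdorff_group ::
  "'g topology \<Rightarrow> ('g \<Rightarrow> 'g \<Rightarrow> 'g) \<Rightarrow> 'g \<Rightarrow> ('g \<Rightarrow> 'g) \<Rightarrow> bool" where
  "compact_hausdorff_group tp mul e inver \<longleftrightarrow>
     (let S = topspace tp in
       (\<forall>x\<in>S. \<forall>y\<in>S. mul x y \<in> S) \<and> e \<in> S \<and> (\<forall>x\<in>S. inver x \<in> S) \<and>
       (\<forall>x\<in>S. \<forall>y\<in>S. \<forall>z\<in>S. mul (mul x y) z = mul x (mul y z)) \<and>
       (\<forall>x\<in>S. mul e x = x \<and> mul x e = x \<and> mul (inver x) x = e \<and> mul x (inver x) = e) \<and>
       continuous_map (prod_topology tp tp) tp (\<lambda>(x, y). mul x y) \<and>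
       continuous_map tp tp inver \<and>
       compact_space tp \<and> Hausdorff_space tp)"

definition haar_probability ::
  "'g topology \<Rightarrow> ('g \<Rightarrow> 'g \<Rightarrow> 'g) \<Rightarrow> 'g measure \<Rightarrow> bool" where
  "haar_probability tp mul \<mu> \<longleftrightarrow>
     prob_space \<mu> \<and> space \<mu> = topspace tp \<and>
     sets \<mu> = sigma_sets (topspace tp) {U. openin tp U} \<and>
     (\<forall>g\<in>topspace tp. \<forall>A\<in>sets \<mu>. emeasure \<mu> (mul g ` A) = emeasure \<mu> A) \<and>
     (\<forall>A\<in>sets \<mu>. emeasure \<mu> A = (INF U\<in>{U. openin tp U \<and> A \<subseteq> U}. emeasure \<mu> U)) \<and>
     (\<forall>U. openin tp U \<longrightarrow>
        emeasure \<mu> U = (SUP K\<in>{K. compactin tp K \<and> K \<subseteq> U}. emeasure \<mu> K))"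

definition measurable_group_action ::
  "'g topology \<Rightarrow> ('g \<Rightarrow> 'g \<Rightarrow> 'g) \<Rightarrow> 'g \<Rightarrow> 'g measure \<Rightarrow> 'a measure \<Rightarrow> ('g \<Rightarrow> 'a \<Rightarrow> 'a) \<Rightarrow> bool" where
  "measurable_group_action tp mul e \<mu> M T \<longleftrightarrow>
     (\<lambda>(\<sigma>, x). T \<sigma> x) \<in> measurable (\<mu> \<Otimes>\<^sub>M M) M \<and>
     (\<forall>x\<in>space M. T e x = x) \<and>
     (\<forall>g\<in>topspace tp. \<forall>h\<in>topspace tp. \<forall>x\<in>space M. T (mul g h) x = T g (T h x))"

definition Mb :: "'a measure \<Rightarrow> ('a \<Rightarrow> real ^ 'n) set" where
  "Mb M = {\<gamma>. \<gamma> \<in> borel_measurable M \<and> bounded (\<gamma> ` space M) \<and> (\<forall>x. x \<notin> space M \<longrightarrow> \<gamma> x = 0)}"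

definition lin_subspace :: "('a \<Rightarrow> real ^ 'n) set \<Rightarrow> bool" where
  "lin_subspace V \<longleftrightarrow> (\<lambda>x. 0) \<in> V \<and>
     (\<forall>\<gamma>\<in>V. \<forall>\<delta>\<in>V. (\<lambda>x. \<gamma> x + \<delta> x) \<in> V) \<and>
     (\<forall>\<gamma>\<in>V. \<forall>c::real. (\<lambda>x. c *\<^sub>R \<gamma> x) \<in> V)"

definition convex_fun_set :: "('a \<Rightarrow> real ^ 'n) set \<Rightarrow> bool" where
  "convex_fun_set \<Gamma> \<longleftrightarrow> (\<forall>\<gamma>\<in>\<Gamma>. \<forall>\<delta>\<in>\<Gamma>. \<forall>t::real. 0 \<le> t \<and> t \<le> 1 \<longrightarrow>
     (\<lambda>x. t *\<^sub>R \<gamma> x + (1 - t) *\<^sub>R \<delta> x) \<in> \<Gamma>)"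

text \<open>A finite signed measure on M, represented by its Jordan decomposition as a
  pair (\<nu>+, \<nu>-) of finite measures on M.\<close>
definition finite_signed :: "'a measure \<Rightarrow> 'a measure \<times> 'a measure \<Rightarrow> bool" where
  "finite_signed M \<nu> \<longleftrightarrow> finite_measure (fst \<nu>) \<and> finite_measure (snd \<nu>) \<and>
     sets (fst \<nu>) = sets M \<and> sets (snd \<nu>) = sets M"

definition tau :: "('n::finite \<Rightarrow> 'a measure \<times> 'a measure) \<Rightarrow> ('a \<Rightarrow> real ^ 'n) \<Rightarrow> real" where
  "tau \<nu> \<gamma> = (\<Sum>i\<in>UNIV. (\<integral>x. \<gamma> x $ i \<partial>fst (\<nu> i)) - (\<integral>x. \<gamma> x $ i \<partial>snd (\<nu> i)))"

definition MX_topology :: "'a measure \<Rightarrow> ('a \<Rightarrow> real ^ 'n::finite) set \<Rightarrow> ('a \<Rightarrow> real ^ 'n) topology" where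
  "MX_topology M V = topology_generated_by
     {{\<gamma>\<in>V. tau \<nu> \<gamma> \<in> U} | \<nu> U. (\<forall>i. finite_signed M (\<nu> i)) \<and> open U}"

definition S_op :: "'g measure \<Rightarrow> 'a measure \<Rightarrow> ('g \<Rightarrow> 'a \<Rightarrow> 'a) \<Rightarrow> ('a \<Rightarrow> real ^ 'n) \<Rightarrow> 'a \<Rightarrow> real ^ 'n" where
  "S_op \<mu> M T \<gamma> = (\<lambda>x. if x \<in> space M then (\<integral>\<sigma>. \<gamma> (T \<sigma> x) \<partial>\<mu>) else 0)"

definition compose_action :: "'a measure \<Rightarrow> ('g \<Rightarrow> 'a \<Rightarrow> 'a) \<Rightarrow> 'g \<Rightarrow> ('a \<Rightarrow> real ^ 'n) \<Rightarrow> 'a \<Rightarrow> real ^ 'n" where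
  "compose_action M T \<sigma> \<gamma> = (\<lambda>x. if x \<in> space M then \<gamma> (T \<sigma> x) else 0)"

end

theory Submission
  imports Defs
begin

text \<open>Suppose \<open>S\<^sub>\<Sigma>[\<gamma>] \<notin> \<Gamma>\<close>. Closedness in the \<open>M(X)\<close>-topology gives finitely many functionals
  \<open>\<tau>\<^sub>\<nu>\<close> and \<open>\<epsilon> > 0\<close> such that no element of \<open>\<Gamma>\<close> is \<open>\<epsilon>\<close>-close to \<open>S\<^sub>\<Sigma>[\<gamma>]\<close> under all of them.
  By Fubini, \<open>\<tau>\<^sub>\<nu>(S\<^sub>\<Sigma>[\<gamma>])\<close> is the average over \<open>\<sigma>\<close> of the bounded measurable functions
  \<open>\<sigma> \<mapsto> \<tau>\<^sub>\<nu>(\<gamma> \<circ> T\<^sub>\<sigma>)\<close>. Partitioning \<open>\<Sigma>\<close> into the finitely many measurable sets on which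
  all these functions vary by less than \<open>\<epsilon>/2\<close> and choosing one point \<open>\<sigma>\<close> in each, the
  corresponding convex combination of the translates \<open>\<gamma> \<circ> T\<^sub>\<sigma> \<in> \<Gamma>\<close> lies in \<open>\<Gamma>\<close> and is
  \<open>\<epsilon>\<close>-close to \<open>S\<^sub>\<Sigma>[\<gamma>]\<close>, a contradiction.\<close>

section \<open>Weak topologies induced by real functionals\<close>

definition weak_topology_on :: "'a set \<Rightarrow> ('i \<Rightarrow> 'a \<Rightarrow> real) \<Rightarrow> 'i set \<Rightarrow> 'a topology" where
  "weak_topology_on V \<tau> I = topology_generated_by {{x\<in>V. \<tau> i x \<in> U} | i U. i \<in> I \<and> open U}"

definition weak_ball :: "'a set \<Rightarrow> ('i \<Rightarrow> 'a \<Rightarrow> real) \<Rightarrow> 'i set \<Rightarrow> 'a \<Rightarrow> real \<Rightarrow> 'a set" where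
  "weak_ball V \<tau> F x \<epsilon> = {y\<in>V. \<forall>i\<in>F. \<bar>\<tau> i y - \<tau> i x\<bar> < \<epsilon>}"

lemma topspace_weak_topology_on:
  assumes "I \<noteq> {}"
  shows "topspace (weak_topology_on V \<tau> I) = V"
proof -
  obtain i where "i \<in> I" using assms by blast
  then have "{x\<in>V. \<tau> i x \<in> UNIV} \<in> {{x\<in>V. \<tau> i x \<in> U} | i U. i \<in> I \<and> open U}" by blast
  then show ?thesis unfolding weak_topology_on_def by auto
qed

definition weak_nhd :: "'a set \<Rightarrow> ('i \<Rightarrow> 'a \<Rightarrow> real) \<Rightarrow> 'i set \<Rightarrow> 'a \<Rightarrow> 'a set \<Rightarrow> bool" where
  "weak_nhd V \<tau> I x W \<longleftrightarrow> (\<exists>F \<epsilon>. finite F \<and> F \<subseteq> I \<and> \<epsilon> > 0 \<and> weak_ball V \<tau> F x \<epsilon> \<subseteq> W)"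

lemma weak_ball_antimono:
  "F \<subseteq> G \<Longrightarrow> \<epsilon>' \<le> \<epsilon> \<Longrightarrow> weak_ball V \<tau> G x \<epsilon>' \<subseteq> weak_ball V \<tau> F x \<epsilon>"
  unfolding weak_ball_def by fastforce

lemma weak_nhd_mono: "weak_nhd V \<tau> I x W \<Longrightarrow> W \<subseteq> W' \<Longrightarrow> weak_nhd V \<tau> I x W'"
  unfolding weak_nhd_def by (meson order_trans)

lemma weak_nhd_Int:
  assumes "weak_nhd V \<tau> I x W" "weak_nhd V \<tau> I x W'"
  shows "weak_nhd V \<tau> I x (W \<inter> W')"
proof -
  obtain F \<epsilon> F' \<epsilon>' where "finite F" "F \<subseteq> I" "\<epsilon> > 0" "weak_ball V \<tau> F x \<epsilon> \<subseteq> W"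
    and "finite F'" "F' \<subseteq> I" "\<epsilon>' > 0" "weak_ball V \<tau> F' x \<epsilon>' \<subseteq> W'"
    using assms unfolding weak_nhd_def by blast
  moreover have "weak_ball V \<tau> (F \<union> F') x (min \<epsilon> \<epsilon>') \<subseteq> weak_ball V \<tau> F x \<epsilon>"
    and "weak_ball V \<tau> (F \<union> F') x (min \<epsilon> \<epsilon>') \<subseteq> weak_ball V \<tau> F' x \<epsilon>'"
    by (simp_all add: weak_ball_antimono)
  ultimately show ?thesis
    unfolding weak_nhd_def by (intro exI[of _ "F \<union> F'"] exI[of _ "min \<epsilon> \<epsilon>'"]) auto
qed

lemma weak_nhd_subbasic:
  assumes "i \<in> I" "open U" "x \<in> V" "\<tau> i x \<in> U"
  shows "weak_nhd V \<tau> I x {y\<in>V. \<tau> i y \<in> U}"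
proof -
  obtain \<epsilon> where "\<epsilon> > 0" and ball: "\<And>t. dist t (\<tau> i x) < \<epsilon> \<Longrightarrow> t \<in> U"
    using \<open>open U\<close> \<open>\<tau> i x \<in> U\<close> open_dist by metis
  have "weak_ball V \<tau> {i} x \<epsilon> \<subseteq> {y\<in>V. \<tau> i y \<in> U}"
    using ball unfolding weak_ball_def dist_real_def by auto
  with \<open>i \<in> I\<close> \<open>\<epsilon> > 0\<close> show ?thesis
    unfolding weak_nhd_def by (intro exI[of _ "{i}"] exI[of _ \<epsilon>]) simp
qed

lemma openin_weak_topology_on_imp_weak_nhd:
  assumes "openin (weak_topology_on V \<tau> I) W" "x \<in> W"
  shows "weak_nhd V \<tau> I x W"
proof -
  have "generate_topology_on {{x\<in>V. \<tau> i x \<in> U} | i U. i \<in> I \<and> open U} W"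
    using assms(1) unfolding weak_topology_on_def by (rule openin_topology_generated_by)
  then have "\<forall>x\<in>W. weak_nhd V \<tau> I x W"
  proof induction
    case Empty
    then show ?case by simp
  next
    case (Int a b)
    then show ?case by (simp add: weak_nhd_Int)
  next
    case (UN K)
    then show ?case by (meson UnionE Union_upper weak_nhd_mono)
  next
    case (Basis s)
    then show ?case by (auto intro: weak_nhd_subbasic)
  qed
  with assms(2) show ?thesis by blast
qed

lemma mem_closedin_weak_topology_on:
  assumes closed: "closedin (weak_topology_on V \<tau> I) \<Gamma>" and "I \<noteq> {}" "p \<in> V"
    and approx: "\<And>F \<epsilon>. finite F \<Longrightarrow> F \<subseteq> I \<Longrightarrow> \<epsilon> > 0 \<Longrightarrow> \<exists>q\<in>\<Gamma>. \<forall>i\<in>F. \<bar>\<tau> i q - \<tau> i p\<bar> < \<epsilon>"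
  shows "p \<in> \<Gamma>"
proof (rule ccontr)
  assume "p \<notin> \<Gamma>"
  have top: "topspace (weak_topology_on V \<tau> I) = V"
    using \<open>I \<noteq> {}\<close> by (rule topspace_weak_topology_on)
  then have "openin (weak_topology_on V \<tau> I) (V - \<Gamma>)" using closed by (simp add: closedin_def)
  then have "weak_nhd V \<tau> I p (V - \<Gamma>)"
    using \<open>p \<in> V\<close> \<open>p \<notin> \<Gamma>\<close> by (intro openin_weak_topology_on_imp_weak_nhd) simp_all
  then obtain F \<epsilon> where F: "finite F" "F \<subseteq> I" "\<epsilon> > 0" and "weak_ball V \<tau> F p \<epsilon> \<subseteq> V - \<Gamma>"
    unfolding weak_nhd_def by blast
  moreover obtain q where "q \<in> \<Gamma>" "\<forall>i\<in>F. \<bar>\<tau> i q - \<tau> i p\<bar> < \<epsilon>" using approx[OF F] by blast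
  moreover have "\<Gamma> \<subseteq> V" using closedin_subset[OF closed] top by simp
  ultimately show False unfolding weak_ball_def by blast
qed

lemma finite_signed_null_measure: "finite_signed M (null_measure M, null_measure M)"
  unfolding finite_signed_def by (simp add: finite_measureI)

lemma MX_topology_eq_weak_topology_on:
  "MX_topology M V = weak_topology_on V tau {\<nu>. \<forall>i. finite_signed M (\<nu> i)}"
  unfolding MX_topology_def weak_topology_on_def by simp

section \<open>Approximating integrals by convex combinations of values\<close>

lemma abs_diff_less_if_floor_divide_eq:
  fixes a b d :: real
  assumes "d > 0" "\<lfloor>a / d\<rfloor> = \<lfloor>b / d\<rfloor>"
  shows "\<bar>a - b\<bar> < d"
proof -
  have "\<bar>a / d - b / d\<bar> < 1"
    using assms(2) real_of_int_floor_gt_diff_one[of "a / d"] real_of_int_floor_gt_diff_one[of "b / d"]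
      of_int_floor_le[of "a / d"] of_int_floor_le[of "b / d"] by linarith
  then show ?thesis using assms(1) by (simp add: abs_divide flip: diff_divide_distrib)
qed

lemma (in finite_measure) integral_comp_finite_range:
  fixes f :: "'b \<Rightarrow> real"
  assumes "finite (h ` space M)" and levels: "\<And>v. {\<sigma>\<in>space M. h \<sigma> = v} \<in> sets M"
  shows "integrable M (\<lambda>\<sigma>. f (h \<sigma>))"
    and "(\<integral>\<sigma>. f (h \<sigma>) \<partial>M) = (\<Sum>v\<in>h ` space M. measure M {\<sigma>\<in>space M. h \<sigma> = v} * f v)"
proof -
  define A where "A v = {\<sigma>\<in>space M. h \<sigma> = v}" for v
  have step: "f (h \<sigma>) = (\<Sum>v\<in>h ` space M. indicator (A v) \<sigma> * f v)" if "\<sigma> \<in> space M" for \<sigma>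
    using that \<open>finite (h ` space M)\<close> unfolding A_def by (simp add: indicator_def if_distrib sum.If_cases)
  have A_integrable: "integrable M (indicator (A v) :: 'a \<Rightarrow> real)" for v
    using levels unfolding A_def by (auto simp: less_top[symmetric] intro!: integrable_real_indicator)
  have "integrable M (\<lambda>\<sigma>. f (h \<sigma>)) \<longleftrightarrow> integrable M (\<lambda>\<sigma>. \<Sum>v\<in>h ` space M. indicator (A v) \<sigma> * f v)"
    by (rule Bochner_Integration.integrable_cong) (simp_all add: step)
  then show "integrable M (\<lambda>\<sigma>. f (h \<sigma>))" by (simp add: A_integrable)
  have "(\<integral>\<sigma>. f (h \<sigma>) \<partial>M) = (\<integral>\<sigma>. (\<Sum>v\<in>h ` space M. indicator (A v) \<sigma> * f v) \<partial>M)"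
    by (rule Bochner_Integration.integral_cong) (simp_all add: step)
  also have "\<dots> = (\<Sum>v\<in>h ` space M. (\<integral>\<sigma>. indicator (A v) \<sigma> * f v \<partial>M))"
    by (rule Bochner_Integration.integral_sum) (simp add: A_integrable)
  also have "\<dots> = (\<Sum>v\<in>h ` space M. measure M (A v) * f v)"
    by (simp add: A_def Int_absorb2)
  finally show "(\<integral>\<sigma>. f (h \<sigma>) \<partial>M) = (\<Sum>v\<in>h ` space M. measure M {\<sigma>\<in>space M. h \<sigma> = v} * f v)"
    by (simp add: A_def)
qed

lemma (in prob_space) integral_approx_by_representatives:
  fixes g :: "'i \<Rightarrow> 'a \<Rightarrow> real"
  assumes "finite (h ` space M)" and levels: "\<And>v. {\<sigma>\<in>space M. h \<sigma> = v} \<in> events"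
    and integrable: "\<And>i. i \<in> F \<Longrightarrow> integrable M (g i)"
    and small: "\<And>i \<sigma> \<tau>. i \<in> F \<Longrightarrow> \<sigma> \<in> space M \<Longrightarrow> \<tau> \<in> space M \<Longrightarrow> h \<sigma> = h \<tau> \<Longrightarrow> \<bar>g i \<sigma> - g i \<tau>\<bar> \<le> \<delta>"
  obtains P w where "finite P" "P \<subseteq> space M" "\<forall>\<sigma>\<in>P. w \<sigma> \<ge> 0" "sum w P = 1"
    "\<forall>i\<in>F. \<bar>(\<Sum>\<sigma>\<in>P. w \<sigma> * g i \<sigma>) - (\<integral>\<sigma>. g i \<sigma> \<partial>M)\<bar> \<le> \<delta>"
proof -
  define r where "r v = (SOME \<sigma>. \<sigma> \<in> space M \<and> h \<sigma> = v)" for v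
  have r: "r v \<in> space M \<and> h (r v) = v" if "v \<in> h ` space M" for v
  proof -
    from that have "\<exists>\<sigma>. \<sigma> \<in> space M \<and> h \<sigma> = v" by blast
    then show ?thesis unfolding r_def by (rule someI_ex)
  qed
  define w where "w \<sigma> = prob {\<tau>\<in>space M. h \<tau> = h \<sigma>}" for \<sigma>
  have sum_w: "(\<Sum>\<sigma>\<in>r ` h ` space M. w \<sigma> * f \<sigma>)
      = (\<Sum>v\<in>h ` space M. prob {\<tau>\<in>space M. h \<tau> = v} * f (r v))" for f
    unfolding w_def using r by (subst sum.reindex) (auto intro: inj_on_inverseI)
  note step = integral_comp_finite_range[OF \<open>finite (h ` space M)\<close> levels]
  show ?thesis
  proof
    show "finite (r ` h ` space M)" "r ` h ` space M \<subseteq> space M"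
      using \<open>finite (h ` space M)\<close> r by auto
    show "\<forall>\<sigma>\<in>r ` h ` space M. w \<sigma> \<ge> 0" unfolding w_def by simp
    show "sum w (r ` h ` space M) = 1"
      using sum_w[of "\<lambda>_. 1"] step(2)[of "\<lambda>_. 1"] by (simp add: prob_space)
    show "\<forall>i\<in>F. \<bar>(\<Sum>\<sigma>\<in>r ` h ` space M. w \<sigma> * g i \<sigma>) - (\<integral>\<sigma>. g i \<sigma> \<partial>M)\<bar> \<le> \<delta>"
    proof
      fix i assume "i \<in> F"
      have "(\<Sum>\<sigma>\<in>r ` h ` space M. w \<sigma> * g i \<sigma>) - (\<integral>\<sigma>. g i \<sigma> \<partial>M)
          = (\<integral>\<sigma>. g i (r (h \<sigma>)) - g i \<sigma> \<partial>M)"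
        using sum_w[of "g i"] step[of "\<lambda>v. g i (r v)"] integrable[OF \<open>i \<in> F\<close>] by simp
      also have "\<bar>\<dots>\<bar> \<le> (\<integral>\<sigma>. \<bar>g i (r (h \<sigma>)) - g i \<sigma>\<bar> \<partial>M)" by (rule integral_abs_bound)
      also have "\<dots> \<le> \<delta>"
      proof (rule integral_le_const)
        show "integrable M (\<lambda>\<sigma>. \<bar>g i (r (h \<sigma>)) - g i \<sigma>\<bar>)"
          using step(1)[of "\<lambda>v. g i (r v)"] integrable[OF \<open>i \<in> F\<close>] by simp
        show "AE \<sigma> in M. \<bar>g i (r (h \<sigma>)) - g i \<sigma>\<bar> \<le> \<delta>"
          using small[OF \<open>i \<in> F\<close>] r by (auto intro!: AE_I2)
      qed
      finally show "\<bar>(\<Sum>\<sigma>\<in>r ` h ` space M. w \<sigma> * g i \<sigma>) - (\<integral>\<sigma>. g i \<sigma> \<partial>M)\<bar> \<le> \<delta>" .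
    qed
  qed
qed

lemma (in prob_space) integral_approx_by_convex_combination:
  fixes g :: "'i \<Rightarrow> 'a \<Rightarrow> real"
  assumes "finite F" "\<delta> > 0"
    and meas: "\<And>i. i \<in> F \<Longrightarrow> g i \<in> borel_measurable M"
    and bounded: "\<And>i. i \<in> F \<Longrightarrow> \<exists>C. \<forall>\<sigma>\<in>space M. \<bar>g i \<sigma>\<bar> \<le> C"
  obtains P w where "finite P" "P \<subseteq> space M" "\<forall>\<sigma>\<in>P. w \<sigma> \<ge> 0" "sum w P = 1"
    "\<forall>i\<in>F. \<bar>(\<Sum>\<sigma>\<in>P. w \<sigma> * g i \<sigma>) - (\<integral>\<sigma>. g i \<sigma> \<partial>M)\<bar> \<le> \<delta>"
proof (rule integral_approx_by_representatives)
  obtain C where C: "\<And>i \<sigma>. i \<in> F \<Longrightarrow> \<sigma> \<in> space M \<Longrightarrow> \<bar>g i \<sigma>\<bar> \<le> C i"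
    using bounded by metis
  define h where "h \<sigma> = (\<lambda>i\<in>F. \<lfloor>g i \<sigma> / \<delta>\<rfloor>)" for \<sigma>
  have "h ` space M \<subseteq> PiE F (\<lambda>i. {\<lfloor>- C i / \<delta>\<rfloor> .. \<lfloor>C i / \<delta>\<rfloor>})"
  proof
    fix v assume "v \<in> h ` space M"
    then obtain \<sigma> where \<sigma>: "\<sigma> \<in> space M" "v = h \<sigma>" by blast
    have "\<lfloor>- C i / \<delta>\<rfloor> \<le> \<lfloor>g i \<sigma> / \<delta>\<rfloor> \<and> \<lfloor>g i \<sigma> / \<delta>\<rfloor> \<le> \<lfloor>C i / \<delta>\<rfloor>" if "i \<in> F" for i
      using C[OF that \<sigma>(1)] \<open>\<delta> > 0\<close>
      by (intro conjI floor_mono divide_right_mono) (auto simp: abs_le_iff)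
    then show "v \<in> PiE F (\<lambda>i. {\<lfloor>- C i / \<delta>\<rfloor> .. \<lfloor>C i / \<delta>\<rfloor>})"
      using \<sigma> unfolding h_def by auto
  qed
  then show "finite (h ` space M)" by (rule finite_subset) (simp add: \<open>finite F\<close> finite_PiE)
  show "{\<sigma>\<in>space M. h \<sigma> = v} \<in> events" for v
  proof (cases "v \<in> extensional F")
    case True
    then have "{\<sigma>\<in>space M. h \<sigma> = v} = {\<sigma>\<in>space M. \<forall>i\<in>F. \<lfloor>g i \<sigma> / \<delta>\<rfloor> = v i}"
      unfolding h_def by (auto simp: fun_eq_iff extensional_def)
    also have "\<dots> \<in> events"
      using meas \<open>finite F\<close> by (intro sets.sets_Collect_finite_All) (measurable; simp)
    finally show ?thesis .
  next
    case False
    then have "{\<sigma>\<in>space M. h \<sigma> = v} = {}" unfolding h_def by auto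
    then show ?thesis by (simp only: sets.empty_sets)
  qed
  show "integrable M (g i)" if "i \<in> F" for i
    using C[OF that] meas[OF that] by (intro integrable_const_bound[of _ "C i"]) auto
  show "\<bar>g i \<sigma> - g i \<tau>\<bar> \<le> \<delta>" if "i \<in> F" "h \<sigma> = h \<tau>" for i \<sigma> \<tau>
  proof -
    have "\<lfloor>g i \<sigma> / \<delta>\<rfloor> = \<lfloor>g i \<tau> / \<delta>\<rfloor>"
      using fun_cong[OF \<open>h \<sigma> = h \<tau>\<close>, of i] \<open>i \<in> F\<close> by (simp add: h_def)
    then show ?thesis using abs_diff_less_if_floor_divide_eq[OF \<open>\<delta> > 0\<close>] by (simp add: less_imp_le)
  qed
qed

section \<open>The functionals \<open>tau\<close> and the averaging operator\<close>

lemma Mb_normE: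
  assumes "\<gamma> \<in> Mb M"
  obtains B where "\<And>x. x \<in> space M \<Longrightarrow> norm (\<gamma> x) \<le> B"
proof -
  have "bounded (\<gamma> ` space M)" using assms by (simp add: Mb_def)
  then obtain B where "\<forall>y\<in>\<gamma> ` space M. norm y \<le> B" by (auto simp: bounded_iff)
  then show ?thesis using that by blast
qed

lemma integrable_Mb_component:
  assumes "\<gamma> \<in> Mb M" "finite_measure N" "sets N = sets M"
  shows "integrable N (\<lambda>x. \<gamma> x $ i)"
proof -
  obtain B where B: "\<And>x. x \<in> space M \<Longrightarrow> norm (\<gamma> x) \<le> B" using Mb_normE[OF assms(1)] by blast
  have "space N = space M" using assms(3) by (rule sets_eq_imp_space_eq)
  moreover have "\<gamma> \<in> borel_measurable N"
    using assms(1) by (simp add: Mb_def measurable_cong_sets[OF assms(3) refl])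
  ultimately show ?thesis
    using B Finite_Cartesian_Product.norm_nth_le[of "\<gamma> _" i] measurable_compose[OF _ borel_measurable_nth]
    by (intro finite_measure.integrable_const_bound[OF assms(2), of _ B] AE_I2) (auto intro: order_trans)
qed

lemma tau_sum:
  assumes \<nu>: "\<forall>i. finite_signed M (\<nu> i)" and "finite R" "\<forall>v\<in>R. f v \<in> Mb M"
  shows "tau \<nu> (\<lambda>x. \<Sum>v\<in>R. c v *\<^sub>R f v x) = (\<Sum>v\<in>R. c v * tau \<nu> (f v))"
proof -
  have component: "(\<integral>x. (\<Sum>v\<in>R. c v * f v x $ i) \<partial>N) = (\<Sum>v\<in>R. c v * (\<integral>x. f v x $ i \<partial>N))"
    if "finite_measure N" "sets N = sets M" for N i
    using integrable_Mb_component[OF _ that] assms(3)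
    by (subst Bochner_Integration.integral_sum) (auto intro!: integrable_mult_right)
  have "tau \<nu> (\<lambda>x. \<Sum>v\<in>R. c v *\<^sub>R f v x)
      = (\<Sum>i\<in>UNIV. \<Sum>v\<in>R. c v * ((\<integral>x. f v x $ i \<partial>fst (\<nu> i)) - (\<integral>x. f v x $ i \<partial>snd (\<nu> i))))"
    using \<nu> unfolding tau_def finite_signed_def
    by (simp add: component sum_subtractf right_diff_distrib)
  also have "\<dots> = (\<Sum>v\<in>R. c v * tau \<nu> (f v))"
    unfolding tau_def by (subst sum.swap) (simp add: sum_distrib_left)
  finally show ?thesis .
qed

lemma compose_action_Mb:
  assumes T: "(\<lambda>(\<sigma>, x). T \<sigma> x) \<in> measurable (\<mu> \<Otimes>\<^sub>M M) M"
    and "\<sigma> \<in> space \<mu>" "\<gamma> \<in> Mb M"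
  shows "compose_action M T \<sigma> \<gamma> \<in> Mb M"
proof -
  have T\<sigma>: "T \<sigma> \<in> M \<rightarrow>\<^sub>M M"
    using measurable_Pair2[OF T \<open>\<sigma> \<in> space \<mu>\<close>] by simp
  have "(\<lambda>x. \<gamma> (T \<sigma> x)) \<in> borel_measurable M"
    using \<open>\<gamma> \<in> Mb M\<close> unfolding Mb_def by (blast intro: measurable_compose[OF T\<sigma>])
  then have "compose_action M T \<sigma> \<gamma> \<in> borel_measurable M"
    by (rule measurable_cong[THEN iffD1, rotated]) (simp add: compose_action_def)
  moreover have "compose_action M T \<sigma> \<gamma> ` space M \<subseteq> \<gamma> ` space M"
    using measurable_space[OF T\<sigma>] by (auto simp: compose_action_def)
  then have "bounded (compose_action M T \<sigma> \<gamma> ` space M)"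
    using \<open>\<gamma> \<in> Mb M\<close> bounded_subset by (auto simp: Mb_def)
  ultimately show ?thesis by (simp add: Mb_def compose_action_def)
qed

lemma action_space:
  assumes "(\<lambda>(\<sigma>, x). T \<sigma> x) \<in> measurable (\<mu> \<Otimes>\<^sub>M M) M" "\<sigma> \<in> space \<mu>" "x \<in> space M"
  shows "T \<sigma> x \<in> space M"
  using measurable_space[OF assms(1), of "(\<sigma>, x)"] assms(2,3) by (simp add: space_pair_measure)

lemma measurable_action_component:
  assumes T: "(\<lambda>(\<sigma>, x). T \<sigma> x) \<in> measurable (\<mu> \<Otimes>\<^sub>M M) M" and "\<gamma> \<in> Mb M" "sets N = sets M"
  shows "(\<lambda>(\<sigma>, x). \<gamma> (T \<sigma> x) $ i) \<in> borel_measurable (\<mu> \<Otimes>\<^sub>M N)"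
proof -
  have "(\<lambda>(\<sigma>, x). T \<sigma> x) \<in> measurable (\<mu> \<Otimes>\<^sub>M N) M"
    using T by (simp add: measurable_cong_sets[OF sets_pair_measure_cong[OF refl[of "sets \<mu>"] assms(3)] refl])
  moreover have "\<gamma> \<in> borel_measurable M" using \<open>\<gamma> \<in> Mb M\<close> by (simp add: Mb_def)
  ultimately show ?thesis
    using measurable_compose[OF measurable_compose borel_measurable_nth] by (simp add: case_prod_unfold)
qed

lemma integral_action_component:
  fixes \<gamma> :: "'a \<Rightarrow> real ^ 'n"
  assumes T: "(\<lambda>(\<sigma>, x). T \<sigma> x) \<in> measurable (\<mu> \<Otimes>\<^sub>M M) M"
    and \<gamma>: "\<gamma> \<in> Mb M" and B: "\<And>x. x \<in> space M \<Longrightarrow> norm (\<gamma> x) \<le> B"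
    and N: "finite_measure N" "sets N = sets M"
  shows "(\<lambda>\<sigma>. \<integral>x. \<gamma> (T \<sigma> x) $ i \<partial>N) \<in> borel_measurable \<mu>"
    and "\<And>\<sigma>. \<sigma> \<in> space \<mu> \<Longrightarrow> \<bar>\<integral>x. \<gamma> (T \<sigma> x) $ i \<partial>N\<bar> \<le> B * measure N (space N)"
proof -
  interpret N: finite_measure N by (rule N(1))
  have joint: "(\<lambda>(\<sigma>, x). \<gamma> (T \<sigma> x) $ i) \<in> borel_measurable (\<mu> \<Otimes>\<^sub>M N)"
    using measurable_action_component[OF T \<gamma> N(2)] .
  then show "(\<lambda>\<sigma>. \<integral>x. \<gamma> (T \<sigma> x) $ i \<partial>N) \<in> borel_measurable \<mu>"
    by (rule N.borel_measurable_lebesgue_integral)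
  show "\<bar>\<integral>x. \<gamma> (T \<sigma> x) $ i \<partial>N\<bar> \<le> B * measure N (space N)" if "\<sigma> \<in> space \<mu>" for \<sigma>
  proof -
    have bound: "\<bar>\<gamma> (T \<sigma> x) $ i\<bar> \<le> B" if "x \<in> space N" for x
    proof -
      have "x \<in> space M" using that sets_eq_imp_space_eq[OF N(2)] by simp
      then have "norm (\<gamma> (T \<sigma> x)) \<le> B" using B action_space[OF T \<open>\<sigma> \<in> space \<mu>\<close>] by blast
      then show ?thesis using Finite_Cartesian_Product.norm_nth_le[of "\<gamma> (T \<sigma> x)" i] by simp
    qed
    have "(\<lambda>x. \<gamma> (T \<sigma> x) $ i) \<in> borel_measurable N"
      using measurable_Pair2[OF joint that] by simp
    then have "integrable N (\<lambda>x. \<bar>\<gamma> (T \<sigma> x) $ i\<bar>)"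
      using bound by (intro N.integrable_const_bound[of _ B] AE_I2) auto
    have "\<bar>\<integral>x. \<gamma> (T \<sigma> x) $ i \<partial>N\<bar> \<le> (\<integral>x. \<bar>\<gamma> (T \<sigma> x) $ i\<bar> \<partial>N)"
      by (rule integral_abs_bound)
    also have "\<dots> \<le> (\<integral>x. B \<partial>N)"
      using \<open>integrable N _\<close> bound by (intro integral_mono) auto
    also have "\<dots> = B * measure N (space N)" by simp
    finally show ?thesis .
  qed
qed

lemma S_op_component:
  assumes \<mu>: "finite_measure \<mu>" and T: "(\<lambda>(\<sigma>, x). T \<sigma> x) \<in> measurable (\<mu> \<Otimes>\<^sub>M M) M"
    and \<gamma>: "\<gamma> \<in> Mb M" and "x \<in> space M"
  shows "S_op \<mu> M T \<gamma> x $ i = (\<integral>\<sigma>. \<gamma> (T \<sigma> x) $ i \<partial>\<mu>)"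
proof -
  obtain B where B: "\<And>x. x \<in> space M \<Longrightarrow> norm (\<gamma> x) \<le> B" using Mb_normE[OF \<gamma>] by blast
  have "(\<lambda>\<sigma>. \<gamma> (T \<sigma> x)) \<in> borel_measurable \<mu>"
    using measurable_Pair1[OF T \<open>x \<in> space M\<close>] \<gamma> unfolding Mb_def by (auto intro: measurable_compose)
  then have "integrable \<mu> (\<lambda>\<sigma>. \<gamma> (T \<sigma> x))"
    using B action_space[OF T _ \<open>x \<in> space M\<close>]
    by (intro finite_measure.integrable_const_bound[OF \<mu>, of _ B] AE_I2) auto
  then show ?thesis
    unfolding S_op_def using \<open>x \<in> space M\<close> integral_bounded_linear[OF bounded_linear_vec_nth, symmetric]
    by simp
qed

lemma integral_S_op_component:
  fixes \<gamma> :: "'a \<Rightarrow> real ^ 'n"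
  assumes \<mu>: "finite_measure \<mu>" and T: "(\<lambda>(\<sigma>, x). T \<sigma> x) \<in> measurable (\<mu> \<Otimes>\<^sub>M M) M"
    and \<gamma>: "\<gamma> \<in> Mb M" and N: "finite_measure N" "sets N = sets M"
  shows "(\<integral>x. S_op \<mu> M T \<gamma> x $ i \<partial>N) = (\<integral>\<sigma>. (\<integral>x. \<gamma> (T \<sigma> x) $ i \<partial>N) \<partial>\<mu>)"
proof -
  interpret \<mu>N: pair_sigma_finite \<mu> N
    by (intro pair_sigma_finite.intro finite_measure.sigma_finite_measure \<mu> N(1))
  obtain B where B: "\<And>x. x \<in> space M \<Longrightarrow> norm (\<gamma> x) \<le> B" using Mb_normE[OF \<gamma>] by blast
  have space_N: "space N = space M" using N(2) by (rule sets_eq_imp_space_eq)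
  have "(\<integral>x. S_op \<mu> M T \<gamma> x $ i \<partial>N) = (\<integral>x. (\<integral>\<sigma>. \<gamma> (T \<sigma> x) $ i \<partial>\<mu>) \<partial>N)"
    using S_op_component[OF \<mu> T \<gamma>] space_N by (intro Bochner_Integration.integral_cong) auto
  also have "\<dots> = (\<integral>\<sigma>. (\<integral>x. \<gamma> (T \<sigma> x) $ i \<partial>N) \<partial>\<mu>)"
  proof (rule \<mu>N.Fubini_integral)
    have "\<bar>\<gamma> (T \<sigma> x) $ i\<bar> \<le> B" if "\<sigma> \<in> space \<mu>" "x \<in> space M" for \<sigma> x
      using B[OF action_space[OF T that]] Finite_Cartesian_Product.norm_nth_le[of "\<gamma> (T \<sigma> x)" i]
      by simp
    then show "integrable (\<mu> \<Otimes>\<^sub>M N) (\<lambda>(\<sigma>, x). \<gamma> (T \<sigma> x) $ i)"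
      using measurable_action_component[OF T \<gamma> N(2)] space_N
      by (intro finite_measure.integrable_const_bound[OF finite_measure_pair_measure[OF N(1) \<mu>],
            of _ B] AE_I2) (auto simp: space_pair_measure)
  qed
  finally show ?thesis .
qed

lemma tau_compose_action:
  assumes \<mu>: "finite_measure \<mu>" and T: "(\<lambda>(\<sigma>, x). T \<sigma> x) \<in> measurable (\<mu> \<Otimes>\<^sub>M M) M"
    and \<gamma>: "\<gamma> \<in> Mb M" and \<nu>: "\<forall>i. finite_signed M (\<nu> i)"
  shows "(\<lambda>\<sigma>. tau \<nu> (compose_action M T \<sigma> \<gamma>)) \<in> borel_measurable \<mu>"
    and "\<exists>C. \<forall>\<sigma>\<in>space \<mu>. \<bar>tau \<nu> (compose_action M T \<sigma> \<gamma>)\<bar> \<le> C"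
    and "tau \<nu> (S_op \<mu> M T \<gamma>) = (\<integral>\<sigma>. tau \<nu> (compose_action M T \<sigma> \<gamma>) \<partial>\<mu>)"
proof -
  obtain B where B: "\<And>x. x \<in> space M \<Longrightarrow> norm (\<gamma> x) \<le> B" using Mb_normE[OF \<gamma>] by blast
  define G where "G N i \<sigma> = (\<integral>x. \<gamma> (T \<sigma> x) $ i \<partial>N)" for N i \<sigma>
  have \<nu>_fst: "finite_measure (fst (\<nu> i))" "sets (fst (\<nu> i)) = sets M"
    and \<nu>_snd: "finite_measure (snd (\<nu> i))" "sets (snd (\<nu> i)) = sets M" for i
    using \<nu> unfolding finite_signed_def by auto
  note G_fst = integral_action_component[OF T \<gamma> B \<nu>_fst, folded G_def]
    integral_S_op_component[OF \<mu> T \<gamma> \<nu>_fst, folded G_def]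
  note G_snd = integral_action_component[OF T \<gamma> B \<nu>_snd, folded G_def]
    integral_S_op_component[OF \<mu> T \<gamma> \<nu>_snd, folded G_def]
  have tau_eq: "tau \<nu> (compose_action M T \<sigma> \<gamma>) = (\<Sum>i\<in>UNIV. G (fst (\<nu> i)) i \<sigma> - G (snd (\<nu> i)) i \<sigma>)"
    for \<sigma>
    unfolding tau_def G_def compose_action_def
    using sets_eq_imp_space_eq[OF \<nu>_fst(2)] sets_eq_imp_space_eq[OF \<nu>_snd(2)]
    by (intro sum.cong refl arg_cong2[where f = minus] Bochner_Integration.integral_cong) auto
  show "(\<lambda>\<sigma>. tau \<nu> (compose_action M T \<sigma> \<gamma>)) \<in> borel_measurable \<mu>"
    unfolding tau_eq using G_fst(1) G_snd(1) by measurable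
  show "\<exists>C. \<forall>\<sigma>\<in>space \<mu>. \<bar>tau \<nu> (compose_action M T \<sigma> \<gamma>)\<bar> \<le> C"
  proof (intro exI ballI)
    fix \<sigma> assume "\<sigma> \<in> space \<mu>"
    have "\<bar>tau \<nu> (compose_action M T \<sigma> \<gamma>)\<bar> \<le> (\<Sum>i\<in>UNIV. \<bar>G (fst (\<nu> i)) i \<sigma>\<bar> + \<bar>G (snd (\<nu> i)) i \<sigma>\<bar>)"
      unfolding tau_eq by (rule order_trans[OF sum_abs sum_mono]) simp
    also have "\<dots> \<le> (\<Sum>i\<in>UNIV. B * measure (fst (\<nu> i)) (space (fst (\<nu> i)))
                                + B * measure (snd (\<nu> i)) (space (snd (\<nu> i))))"
      using G_fst(2) G_snd(2) \<open>\<sigma> \<in> space \<mu>\<close> by (intro sum_mono add_mono)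
    finally show "\<bar>tau \<nu> (compose_action M T \<sigma> \<gamma>)\<bar> \<le> \<dots>" .
  qed
  have G_integrable: "integrable \<mu> (G N i)"
    if "G N i \<in> borel_measurable \<mu>" "\<And>\<sigma>. \<sigma> \<in> space \<mu> \<Longrightarrow> \<bar>G N i \<sigma>\<bar> \<le> B * measure N (space N)" for N i
    using that
    by (intro finite_measure.integrable_const_bound[OF \<mu>, of _ "B * measure N (space N)"] AE_I2) auto
  have "tau \<nu> (S_op \<mu> M T \<gamma>) = (\<Sum>i\<in>UNIV. (\<integral>\<sigma>. G (fst (\<nu> i)) i \<sigma> \<partial>\<mu>) - (\<integral>\<sigma>. G (snd (\<nu> i)) i \<sigma> \<partial>\<mu>))"
    unfolding tau_def using G_fst(3) G_snd(3) by simp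
  also have "\<dots> = (\<integral>\<sigma>. (\<Sum>i\<in>UNIV. G (fst (\<nu> i)) i \<sigma> - G (snd (\<nu> i)) i \<sigma>) \<partial>\<mu>)"
    using G_integrable[OF G_fst(1,2)] G_integrable[OF G_snd(1,2)] by simp
  finally show "tau \<nu> (S_op \<mu> M T \<gamma>) = (\<integral>\<sigma>. tau \<nu> (compose_action M T \<sigma> \<gamma>) \<partial>\<mu>)"
    by (simp add: tau_eq)
qed

lemma tau_S_op_approx_by_translates:
  assumes "prob_space \<mu>" and T: "(\<lambda>(\<sigma>, x). T \<sigma> x) \<in> measurable (\<mu> \<Otimes>\<^sub>M M) M"
    and \<gamma>: "\<gamma> \<in> Mb M" and "finite F" and F: "\<And>\<nu>. \<nu> \<in> F \<Longrightarrow> \<forall>i. finite_signed M (\<nu> i)"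
    and "\<delta> > 0"
  obtains P w where "finite P" "P \<subseteq> space \<mu>" "\<forall>\<sigma>\<in>P. w \<sigma> \<ge> 0" "sum w P = 1"
    "\<forall>\<nu>\<in>F. \<bar>tau \<nu> (\<lambda>x. \<Sum>\<sigma>\<in>P. w \<sigma> *\<^sub>R compose_action M T \<sigma> \<gamma> x) - tau \<nu> (S_op \<mu> M T \<gamma>)\<bar> \<le> \<delta>"
proof -
  interpret prob_space \<mu> by fact
  note tau_action = tau_compose_action[OF finite_measure_axioms T \<gamma> F]
  obtain P w where P: "finite P" "P \<subseteq> space \<mu>" "\<forall>\<sigma>\<in>P. w \<sigma> \<ge> 0" "sum w P = 1"
    and close: "\<forall>\<nu>\<in>F. \<bar>(\<Sum>\<sigma>\<in>P. w \<sigma> * tau \<nu> (compose_action M T \<sigma> \<gamma>))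
                        - (\<integral>\<sigma>. tau \<nu> (compose_action M T \<sigma> \<gamma>) \<partial>\<mu>)\<bar> \<le> \<delta>"
    by (rule integral_approx_by_convex_combination[OF \<open>finite F\<close> \<open>\<delta> > 0\<close> tau_action(1,2)])
  have "tau \<nu> (\<lambda>x. \<Sum>\<sigma>\<in>P. w \<sigma> *\<^sub>R compose_action M T \<sigma> \<gamma> x)
      = (\<Sum>\<sigma>\<in>P. w \<sigma> * tau \<nu> (compose_action M T \<sigma> \<gamma>))" if "\<nu> \<in> F" for \<nu>
    using P(1,2) compose_action_Mb[OF T _ \<gamma>] by (intro tau_sum[OF F[OF that]]) auto
  with close show ?thesis by (intro that[OF P]) (simp add: tau_action(3))
qed

lemma convex_fun_set_sum:
  assumes "convex_fun_set \<Gamma>" "finite R" "\<forall>v\<in>R. c v \<ge> 0" "sum c R = 1" "\<forall>v\<in>R. f v \<in> \<Gamma>"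
  shows "(\<lambda>x. \<Sum>v\<in>R. c v *\<^sub>R f v x) \<in> \<Gamma>"
  using assms(2-)
proof (induction R arbitrary: c rule: finite_induct)
  case empty
  then show ?case by simp
next
  case (insert a R)
  have rest: "sum c R = 1 - c a" "sum c R \<ge> 0" using insert by (simp_all add: sum_nonneg)
  show ?case
  proof (cases "c a = 1")
    case True
    then have "\<forall>v\<in>R. c v = 0" using rest insert sum_nonneg_eq_0_iff by (metis diff_self insertCI)
    then have "(\<lambda>x. \<Sum>v\<in>insert a R. c v *\<^sub>R f v x) = f a" using insert True by auto
    then show ?thesis using insert by simp
  next
    case False
    then have pos: "1 - c a > 0" using rest by simp
    define c' where "c' v = c v / (1 - c a)" for v
    have "(\<lambda>x. \<Sum>v\<in>R. c' v *\<^sub>R f v x) \<in> \<Gamma>"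
      using insert pos rest by (intro insert.IH) (simp_all add: c'_def flip: sum_divide_distrib)
    then have "(\<lambda>x. c a *\<^sub>R f a x + (1 - c a) *\<^sub>R (\<Sum>v\<in>R. c' v *\<^sub>R f v x)) \<in> \<Gamma>"
      using assms(1) insert rest unfolding convex_fun_set_def by simp
    moreover have "(\<lambda>x. c a *\<^sub>R f a x + (1 - c a) *\<^sub>R (\<Sum>v\<in>R. c' v *\<^sub>R f v x))
        = (\<lambda>x. \<Sum>v\<in>insert a R. c v *\<^sub>R f v x)"
      using insert pos by (auto simp: c'_def scaleR_sum_right)
    ultimately show ?thesis by simp
  qed
qed

lemma S_op_mem_closed_convex:
  fixes V \<Gamma> :: "('a \<Rightarrow> real ^ 'n::finite) set"
  assumes prob: "prob_space \<mu>" and T: "(\<lambda>(\<sigma>, x). T \<sigma> x) \<in> measurable (\<mu> \<Otimes>\<^sub>M M) M"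
    and "V \<subseteq> Mb M" and convex: "convex_fun_set \<Gamma>" and closed: "closedin (MX_topology M V) \<Gamma>"
    and "\<gamma> \<in> \<Gamma>" and "S_op \<mu> M T \<gamma> \<in> V" and translates: "\<forall>\<sigma>\<in>space \<mu>. compose_action M T \<sigma> \<gamma> \<in> \<Gamma>"
  shows "S_op \<mu> M T \<gamma> \<in> \<Gamma>"
proof -
  define I where "I = {\<nu> :: 'n \<Rightarrow> _. \<forall>i. finite_signed M (\<nu> i)}"
  have closed: "closedin (weak_topology_on V tau I) \<Gamma>"
    using closed unfolding I_def MX_topology_eq_weak_topology_on .
  have "(\<lambda>_. (null_measure M, null_measure M)) \<in> I"
    using finite_signed_null_measure unfolding I_def by simp
  then have "I \<noteq> {}" by blast
  have "\<Gamma> \<subseteq> V"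
    using closedin_subset[OF closed] by (simp add: topspace_weak_topology_on[OF \<open>I \<noteq> {}\<close>])
  then have "\<gamma> \<in> Mb M" using \<open>V \<subseteq> Mb M\<close> \<open>\<gamma> \<in> \<Gamma>\<close> by (simp add: subset_iff)
  show ?thesis
  proof (rule mem_closedin_weak_topology_on[OF closed \<open>I \<noteq> {}\<close> \<open>S_op \<mu> M T \<gamma> \<in> V\<close>])
    fix F and \<epsilon> :: real assume "finite F" "F \<subseteq> I" "\<epsilon> > 0"
    have F: "\<And>\<nu>. \<nu> \<in> F \<Longrightarrow> \<forall>i. finite_signed M (\<nu> i)" using \<open>F \<subseteq> I\<close> unfolding I_def by blast
    have "\<epsilon> / 2 > 0" "\<epsilon> / 2 < \<epsilon>" using \<open>\<epsilon> > 0\<close> by simp_all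
    obtain P w where P: "finite P" "P \<subseteq> space \<mu>" "\<forall>\<sigma>\<in>P. w \<sigma> \<ge> 0" "sum w P = 1"
      and close: "\<forall>\<nu>\<in>F. \<bar>tau \<nu> (\<lambda>x. \<Sum>\<sigma>\<in>P. w \<sigma> *\<^sub>R compose_action M T \<sigma> \<gamma> x)
                             - tau \<nu> (S_op \<mu> M T \<gamma>)\<bar> \<le> \<epsilon> / 2"
      by (rule tau_S_op_approx_by_translates[OF prob T \<open>\<gamma> \<in> Mb M\<close> \<open>finite F\<close> F \<open>\<epsilon> / 2 > 0\<close>])
    have "\<forall>\<nu>\<in>F. \<bar>tau \<nu> (\<lambda>x. \<Sum>\<sigma>\<in>P. w \<sigma> *\<^sub>R compose_action M T \<sigma> \<gamma> x)
                   - tau \<nu> (S_op \<mu> M T \<gamma>)\<bar> < \<epsilon>"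
      using close \<open>\<epsilon> / 2 < \<epsilon>\<close> by (meson order_le_less_trans)
    moreover have "(\<lambda>x. \<Sum>\<sigma>\<in>P. w \<sigma> *\<^sub>R compose_action M T \<sigma> \<gamma> x) \<in> \<Gamma>"
      using translates P(2) by (intro convex_fun_set_sum[OF convex P(1,3,4)]) (simp add: subset_iff)
    ultimately show "\<exists>q\<in>\<Gamma>. \<forall>\<nu>\<in>F. \<bar>tau \<nu> q - tau \<nu> (S_op \<mu> M T \<gamma>)\<bar> < \<epsilon>" by (rule bexI)
  qed
qed

theorem lemma3:
  fixes tp :: "'g topology" and mul :: "'g \<Rightarrow> 'g \<Rightarrow> 'g" and e :: 'g and inver :: "'g \<Rightarrow> 'g"
    and \<mu> :: "'g measure" and M :: "'a measure" and T :: "'g \<Rightarrow> 'a \<Rightarrow> 'a"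
    and V \<Gamma> :: "('a \<Rightarrow> real ^ 'n::finite) set"
  assumes "compact_hausdorff_group tp mul e inver"
    and "haar_probability tp mul \<mu>"
    and "measurable_group_action tp mul e \<mu> M T"
    and "V \<subseteq> Mb M" and "lin_subspace V"
    and "\<Gamma> \<subseteq> V"
    and "convex_fun_set \<Gamma>"
    and "closedin (MX_topology M V) \<Gamma>"
    and "\<forall>\<gamma>\<in>V. S_op \<mu> M T \<gamma> \<in> V"
    and "\<forall>\<gamma>\<in>\<Gamma>. \<forall>\<sigma>\<in>topspace tp. compose_action M T \<sigma> \<gamma> \<in> \<Gamma>"
  shows "\<forall>\<gamma>\<in>\<Gamma>. S_op \<mu> M T \<gamma> \<in> \<Gamma>"
proof
  fix \<gamma> assume "\<gamma> \<in> \<Gamma>"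
  have prob: "prob_space \<mu>" and space_\<mu>: "space \<mu> = topspace tp"
    using assms(2) unfolding haar_probability_def by auto
  have T: "(\<lambda>(\<sigma>, x). T \<sigma> x) \<in> measurable (\<mu> \<Otimes>\<^sub>M M) M"
    using assms(3) unfolding measurable_group_action_def by auto
  show "S_op \<mu> M T \<gamma> \<in> \<Gamma>"
  proof (rule S_op_mem_closed_convex[OF prob T assms(4,7,8) \<open>\<gamma> \<in> \<Gamma>\<close>])
    show "S_op \<mu> M T \<gamma> \<in> V" using assms(6,9) \<open>\<gamma> \<in> \<Gamma>\<close> by blast
    show "\<forall>\<sigma>\<in>space \<mu>. compose_action M T \<sigma> \<gamma> \<in> \<Gamma>" using assms(10) \<open>\<gamma> \<in> \<Gamma>\<close> space_\<mu> by simp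
  qed
qed

end
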